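(* Let $Q$ be a dimer quiver on a torus having at least one perfect matching, with dimer algebra $A$, and let $u\in\mathbb Z^2\setminus\{0\}$. If $p,q\in\mathcal C^u$, then $\bar\tau(p)=\bar\tau(q)\sigma^n$ for some $n\in\mathbb Z$. In particular, if $\sigma\nmid\bar\tau(p)$ and $\sigma\nmid\bar\tau(q)$, then $\bar\tau(p)=\bar\tau(q)$.
   Context: $k$ is an algebraically closed field. A dimer quiver on a torus is a finite quiver $Q$ embedded in $T^2$ such that each connected component of $T^2\setminus Q$ is simply connected and bounded by an oriented cycle (a unit cycle). Paths compose right to left. $A=kQ/I$, $I=\langle p-q\mid\exists a\in Q_1: ap,aq\text{ unit cycles}\rangle$. A perfect matching is a set of arrows containing exactly one arrow of each unit cycle; it is simple if any two vertices are joined by an oriented path avoiding its arrows; $\mathcal S$ is the set of simple matchings, $B=k[x_D\mid D\in\mathcal S]$, $\sigma=\prod_{D\in\mathcal S}x_D$. $\tau:A\to M_{|Q_0|}(B)$ is induced by $e_i\mapsto e_{ii}$, $a\mapsto\prod_{a\in D\in\mathcal S}x_D\,e_{\operatorname{h}(a),\operatorname{t}(a)}$; for $p\in e_jAe_i$, $\tau(p)=\bar\tau(p)e_{ji}$. Divisibility is in $B$. Let $\pi:\mathbb R^2\to T^2$ be a covering with $\pi(\mathbb Z^2)$ a single vertex, $Q^+=\pi^{-1}(Q)$, $p^+$ a lift of a path $p$. A cycle of $A$ is the class mod $I$ of a cycle of $Q$; $\mathcal C^u$ is the set of cycles $p$ with $\operatorname{h}(p^+)=\operatorname{t}(p^+)+u$.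 *)

theory Defs
  imports Main "HOL-Library.Product_Plus" "HOL-Combinatorics.Permutations"
begin

text \<open>The unit cycles are the orbits of two permutations sp (positive unit cycles)
  and sm (negative unit cycles) of Q1: sp a (resp. sm a) is the arrow following a
  in the positive (resp. negative) unit cycle containing a.
  d a :: int * int is the lattice displacement of the lift of a to the covering
  pi : R^2 -> T^2, i.e. the lift of a starting at a lift x of tQ a ends at the
  lift of hQ a lying in the same fundamental translate shifted by d a, so the lift
  of a path p satisfies h(p+) - t(p+) = sum of d over the arrows of p
  (for cycles; vertex positions telescope).\<close>

definition orb :: "('a \<Rightarrow> 'a) \<Rightarrow> 'a \<Rightarrow> 'a set" where
  "orb f a = {(f ^^ n) a | n. True}"

text \<open>Paths are lists of arrows in traversal order: the path a_n ... a_1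
  (composition right to left) is the list [a_1, ..., a_n].\<close>

definition is_path :: "'a set \<Rightarrow> ('a \<Rightarrow> 'v) \<Rightarrow> ('a \<Rightarrow> 'v) \<Rightarrow> 'a list \<Rightarrow> bool" where
  "is_path Q1 hQ tQ p \<longleftrightarrow> set p \<subseteq> Q1 \<and>
     (\<forall>i. Suc i < length p \<longrightarrow> hQ (p ! i) = tQ (p ! Suc i))"

definition path_from_to ::
  "'a set \<Rightarrow> ('a \<Rightarrow> 'v) \<Rightarrow> ('a \<Rightarrow> 'v) \<Rightarrow> 'v \<Rightarrow> 'v \<Rightarrow> 'a list \<Rightarrow> bool" where
  "path_from_to Q1 hQ tQ i j p \<longleftrightarrow> is_path Q1 hQ tQ p \<and>
     ((p = [] \<and> i = j) \<or> (p \<noteq> [] \<and> tQ (hd p) = i \<and> hQ (last p) = j))"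

definition is_cycle :: "'a set \<Rightarrow> ('a \<Rightarrow> 'v) \<Rightarrow> ('a \<Rightarrow> 'v) \<Rightarrow> 'a list \<Rightarrow> bool" where
  "is_cycle Q1 hQ tQ p \<longleftrightarrow> p \<noteq> [] \<and> is_path Q1 hQ tQ p \<and> hQ (last p) = tQ (hd p)"

text \<open>Cellular chain complex of the torus: 1-chains are functions Q1 -> int.\<close>
definition closed_chain ::
  "'v set \<Rightarrow> 'a set \<Rightarrow> ('a \<Rightarrow> 'v) \<Rightarrow> ('a \<Rightarrow> 'v) \<Rightarrow> ('a \<Rightarrow> int) \<Rightarrow> bool" where
  "closed_chain Q0 Q1 hQ tQ c \<longleftrightarrow> (\<forall>a. a \<notin> Q1 \<longrightarrow> c a = 0) \<and>
     (\<forall>v\<in>Q0. (\<Sum>a\<in>{a\<in>Q1. hQ a = v}. c a) = (\<Sum>a\<in>{a\<in>Q1. tQ a = v}. c a))"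

definition boundary_chain ::
  "'a set \<Rightarrow> ('a \<Rightarrow> 'a) \<Rightarrow> ('a \<Rightarrow> 'a) \<Rightarrow> ('a \<Rightarrow> int) \<Rightarrow> bool" where
  "boundary_chain Q1 sp sm c \<longleftrightarrow> (\<exists>f g :: 'a \<Rightarrow> int. \<forall>b\<in>Q1.
      c b = (\<Sum>a\<in>Q1. f a * (if b \<in> orb sp a then 1 else 0)
                     + g a * (if b \<in> orb sm a then 1 else 0)))"

definition chain_disp :: "'a set \<Rightarrow> ('a \<Rightarrow> int \<times> int) \<Rightarrow> ('a \<Rightarrow> int) \<Rightarrow> int \<times> int" where
  "chain_disp Q1 d c = ((\<Sum>a\<in>Q1. c a * fst (d a)), (\<Sum>a\<in>Q1. c a * snd (d a)))"

text \<open>Q (with unit cycles given by sp, sm) is a dimer quiver cellularly embedded in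
  a torus, and d is the displacement data of a covering pi : R^2 -> T^2 with deck
  group Z^2 (i.e. the induced map H_1(T^2) -> Z^2 is an isomorphism).\<close>
definition dimer_torus ::
  "'v set \<Rightarrow> 'a set \<Rightarrow> ('a \<Rightarrow> 'v) \<Rightarrow> ('a \<Rightarrow> 'v) \<Rightarrow> ('a \<Rightarrow> 'a) \<Rightarrow> ('a \<Rightarrow> 'a)
    \<Rightarrow> ('a \<Rightarrow> int \<times> int) \<Rightarrow> bool" where
  "dimer_torus Q0 Q1 hQ tQ sp sm d \<longleftrightarrow>
     finite Q0 \<and> finite Q1 \<and> Q0 \<noteq> {} \<and>
     (\<forall>a\<in>Q1. hQ a \<in> Q0 \<and> tQ a \<in> Q0) \<and>
     sp permutes Q1 \<and> sm permutes Q1 \<and>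
     (\<forall>a\<in>Q1. tQ (sp a) = hQ a \<and> tQ (sm a) = hQ a) \<and>
     \<comment> \<open>surface: the link of each vertex is a single circle\<close>
     (\<forall>v\<in>Q0. {a\<in>Q1. hQ a = v} \<noteq> {} \<and>
        (\<forall>a\<in>Q1. \<forall>b\<in>Q1. hQ a = v \<longrightarrow> hQ b = v \<longrightarrow>
           b \<in> orb (inv_into Q1 sm \<circ> sp) a)) \<and>
     \<comment> \<open>connected\<close>
     (\<forall>v\<in>Q0. \<forall>w\<in>Q0. (v, w) \<in> ({(tQ a, hQ a) | a. a \<in> Q1} \<union> {(hQ a, tQ a) | a. a \<in> Q1})\<^sup>*) \<and>
     \<comment> \<open>Euler characteristic 0 (genus one)\<close>
     int (card Q0) - int (card Q1) + int (card (orb sp ` Q1)) + int (card (orb sm ` Q1)) = 0 \<and>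
     \<comment> \<open>covering data: unit cycles lift to closed cycles\<close>
     (\<forall>a\<in>Q1. (\<Sum>b\<in>orb sp a. d b) = 0 \<and> (\<Sum>b\<in>orb sm a. d b) = 0) \<and>
     \<comment> \<open>H_1(T^2) -> Z^2 induced by d is an isomorphism\<close>
     (\<forall>c. closed_chain Q0 Q1 hQ tQ c \<longrightarrow>
        (chain_disp Q1 d c = (0, 0) \<longleftrightarrow> boundary_chain Q1 sp sm c)) \<and>
     (\<forall>z. \<exists>c. closed_chain Q0 Q1 hQ tQ c \<and> chain_disp Q1 d c = z)"

text \<open>p is a cycle of Q in C^u: h(p+) = t(p+) + u.\<close>
definition in_C ::
  "'a set \<Rightarrow> ('a \<Rightarrow> 'v) \<Rightarrow> ('a \<Rightarrow> 'v) \<Rightarrow> ('a \<Rightarrow> int \<times> int) \<Rightarrow> int \<times> int \<Rightarrow> 'a list \<Rightarrow> bool" where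
  "in_C Q1 hQ tQ d u p \<longleftrightarrow> is_cycle Q1 hQ tQ p \<and> sum_list (map d p) = u"

definition perfect_matching :: "'a set \<Rightarrow> ('a \<Rightarrow> 'a) \<Rightarrow> ('a \<Rightarrow> 'a) \<Rightarrow> 'a set \<Rightarrow> bool" where
  "perfect_matching Q1 sp sm D \<longleftrightarrow> D \<subseteq> Q1 \<and>
     (\<forall>a\<in>Q1. card (D \<inter> orb sp a) = 1 \<and> card (D \<inter> orb sm a) = 1)"

definition simple_matching ::
  "'v set \<Rightarrow> 'a set \<Rightarrow> ('a \<Rightarrow> 'v) \<Rightarrow> ('a \<Rightarrow> 'v) \<Rightarrow> ('a \<Rightarrow> 'a) \<Rightarrow> ('a \<Rightarrow> 'a) \<Rightarrow> 'a set \<Rightarrow> bool" where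
  "simple_matching Q0 Q1 hQ tQ sp sm D \<longleftrightarrow> perfect_matching Q1 sp sm D \<and>
     (\<forall>i\<in>Q0. \<forall>j\<in>Q0. \<exists>p. path_from_to (Q1 - D) hQ tQ i j p)"

text \<open>tau_bar p is a monomial in B = k[x_D | D in S]; we represent it by its
  exponent vector: the exponent of x_D is the number of arrows of p
  (with multiplicity) lying in D.\<close>
definition tau_bar :: "'a set set \<Rightarrow> 'a list \<Rightarrow> 'a set \<Rightarrow> nat" where
  "tau_bar S p D = (if D \<in> S then length (filter (\<lambda>a. a \<in> D) p) else 0)"

text \<open>sigma = product of all x_D, D in S; monomial divisibility.\<close>
definition sigma_mono :: "'a set set \<Rightarrow> 'a set \<Rightarrow> nat" where
  "sigma_mono S D = (if D \<in> S then 1 else 0)"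

definition mono_dvd :: "('a set \<Rightarrow> nat) \<Rightarrow> ('a set \<Rightarrow> nat) \<Rightarrow> bool" where
  "mono_dvd m1 m2 \<longleftrightarrow> (\<forall>D. m1 D \<le> m2 D)"

text \<open>m1 = m2 * sigma^n with n an integer (in the fraction field of B).\<close>
definition eq_sigma_pow :: "'a set set \<Rightarrow> ('a set \<Rightarrow> nat) \<Rightarrow> ('a set \<Rightarrow> nat) \<Rightarrow> int \<Rightarrow> bool" where
  "eq_sigma_pow S m1 m2 n \<longleftrightarrow> (\<forall>D. int (m1 D) = int (m2 D) + n * int (sigma_mono S D))"

end

theory Submission
  imports Defs
begin

text \<open>Two cycles p, q in \<open>\<C>\<^sup>u\<close> have the same lift displacement. Since the
  displacement identifies \<open>H\<^sub>1(T\<^sup>2)\<close> with \<open>\<int>\<^sup>2\<close>, the 1-chain \<open>p - q\<close> is then the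
  boundary of a 2-chain, i.e. an integer combination of unit cycles. A perfect matching
  D contains exactly one arrow of every unit cycle, so the number of arrows of \<open>p - q\<close>
  in D, which is the \<open>x\<^sub>D\<close>-exponent of \<open>\<tau>(p)/\<tau>(q)\<close>, is the sum n of the
  coefficients of that combination, independently of D; hence \<open>\<tau>(p) = \<tau>(q)\<sigma>\<^sup>n\<close>.
  If neither side is divisible by \<open>\<sigma>\<close>, some exponent of each vanishes, forcing
  \<open>n \<le> 0\<close> and \<open>n \<ge> 0\<close>.\<close>

lemma sum_list_map_eq_sum_count_list:
  fixes f :: "'a \<Rightarrow> 'b::comm_semiring_1"
  assumes "set xs \<subseteq> X" "finite X"
  shows "sum_list (map f xs) = (\<Sum>x\<in>X. of_nat (count_list xs x) * f x)"
  using assms(1)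
proof (induction xs)
  case (Cons y ys)
  have "(\<Sum>x\<in>X. of_nat (count_list (y # ys) x) * f x)
      = (\<Sum>x\<in>X. (if y = x then f x else 0) + of_nat (count_list ys x) * f x)"
    by (rule sum.cong) (auto simp: algebra_simps)
  then show ?case using Cons assms(2) by (simp add: sum.distrib sum.delta)
qed simp

lemma sum_count_list_fiber:
  assumes "set xs \<subseteq> X" "finite X"
  shows "(\<Sum>a\<in>{a\<in>X. f a = v}. count_list xs a) = count_list (map f xs) v"
  using assms(1)
proof (induction xs)
  case (Cons y ys)
  have "(\<Sum>a\<in>{a\<in>X. f a = v}. count_list (y # ys) a)
      = (\<Sum>a\<in>{a\<in>X. f a = v}. (if y = a then 1 else 0) + count_list ys a)"
    by (rule sum.cong) auto
  then show ?case using Cons assms(2) by (simp add: sum.distrib)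
qed simp

lemma count_list_rotate1 [simp]: "count_list (rotate1 xs) x = count_list xs x"
  by (cases xs) auto

lemma fst_sum_list: "fst (sum_list xs) = sum_list (map fst xs)"
  and snd_sum_list: "snd (sum_list xs) = sum_list (map snd xs)"
  by (induction xs) auto

lemma is_cycle_subset: "is_cycle Q1 hQ tQ p \<Longrightarrow> set p \<subseteq> Q1"
  unfolding is_cycle_def is_path_def by blast

lemma is_cycle_heads_rotate1_tails:
  assumes "is_cycle Q1 hQ tQ p"
  shows "map hQ p = rotate1 (map tQ p)"
proof (rule nth_equalityI)
  fix i assume "i < length (map hQ p)"
  then have i: "i < length p" by simp
  from assms have "p \<noteq> []" "is_path Q1 hQ tQ p" "hQ (last p) = tQ (hd p)"
    unfolding is_cycle_def by auto
  then have "hQ (p ! i) = tQ (p ! (Suc i mod length p))"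
  proof (cases "Suc i < length p")
    case False
    then have "Suc i = length p" using i by simp
    then have "i = length p - 1" "Suc i mod length p = 0" by auto
    then show ?thesis using \<open>p \<noteq> []\<close> \<open>hQ (last p) = tQ (hd p)\<close>
      by (simp add: last_conv_nth hd_conv_nth)
  qed (use \<open>is_path Q1 hQ tQ p\<close> in \<open>simp add: is_path_def\<close>)
  moreover have "Suc i mod length p < length p" using i by (intro mod_less_divisor) linarith
  ultimately show "map hQ p ! i = rotate1 (map tQ p) ! i"
    using i by (simp add: nth_rotate1)
qed simp

definition path_chain :: "'a list \<Rightarrow> 'a \<Rightarrow> int" where
  "path_chain p a = int (count_list p a)"

lemma closed_chain_path_chain:
  assumes "is_cycle Q1 hQ tQ p" "finite Q1"
  shows "closed_chain Q0 Q1 hQ tQ (path_chain p)"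
  unfolding closed_chain_def path_chain_def
proof (intro conjI allI impI ballI)
  show "int (count_list p a) = 0" if "a \<notin> Q1" for a
    using that is_cycle_subset[OF assms(1)] by (metis count_notin of_nat_0 subsetD)
  fix v
  have sub: "set p \<subseteq> Q1" using is_cycle_subset[OF assms(1)] .
  have "(\<Sum>a\<in>{a\<in>Q1. hQ a = v}. count_list p a) = count_list (map hQ p) v"
    by (rule sum_count_list_fiber[OF sub assms(2)])
  also have "\<dots> = count_list (map tQ p) v"
    by (simp only: is_cycle_heads_rotate1_tails[OF assms(1)] count_list_rotate1)
  also have "\<dots> = (\<Sum>a\<in>{a\<in>Q1. tQ a = v}. count_list p a)"
    by (rule sum_count_list_fiber[OF sub assms(2), symmetric])
  finally show "(\<Sum>a\<in>{a\<in>Q1. hQ a = v}. int (count_list p a)) = (\<Sum>a\<in>{a\<in>Q1. tQ a = v}. int (count_list p a))"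
    by (simp flip: of_nat_sum)
qed

lemma length_filter_mem_eq_sum_path_chain:
  assumes "finite D"
  shows "int (length (filter (\<lambda>a. a \<in> D) p)) = (\<Sum>b\<in>D. path_chain p b)"
proof -
  have "{a \<in> set p \<union> D. a \<in> D} = D" by blast
  then have "(\<Sum>b\<in>D. count_list p b) = count_list (map (\<lambda>a. a \<in> D) p) True"
    using sum_count_list_fiber[of p "set p \<union> D" "\<lambda>a. a \<in> D" True] assms by simp
  then show ?thesis
    by (simp add: path_chain_def count_list_eq_length_filter filter_map comp_def flip: of_nat_sum)
qed

lemma closed_chain_diff:
  assumes "closed_chain Q0 Q1 hQ tQ c" "closed_chain Q0 Q1 hQ tQ c'"
  shows "closed_chain Q0 Q1 hQ tQ (\<lambda>a. c a - c' a)"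
  using assms unfolding closed_chain_def by (simp add: sum_subtractf)

lemma chain_disp_diff:
  "chain_disp Q1 d (\<lambda>a. c a - c' a) = chain_disp Q1 d c - chain_disp Q1 d c'"
  unfolding chain_disp_def by (simp add: left_diff_distrib sum_subtractf)

lemma chain_disp_path_chain:
  assumes "set p \<subseteq> Q1" "finite Q1"
  shows "chain_disp Q1 d (path_chain p) = sum_list (map d p)"
  unfolding chain_disp_def path_chain_def
  using sum_list_map_eq_sum_count_list[OF assms, of "\<lambda>a. fst (d a)"]
    sum_list_map_eq_sum_count_list[OF assms, of "\<lambda>a. snd (d a)"]
  by (simp add: prod_eq_iff fst_sum_list snd_sum_list comp_def)

lemma boundary_chain_sum_perfect_matching:
  assumes "boundary_chain Q1 sp sm c" "finite Q1"
  obtains n where "\<And>D. perfect_matching Q1 sp sm D \<Longrightarrow> (\<Sum>b\<in>D. c b) = n"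
proof -
  obtain f g :: "'a \<Rightarrow> int" where fg: "\<And>b. b \<in> Q1 \<Longrightarrow>
      c b = (\<Sum>a\<in>Q1. f a * (if b \<in> orb sp a then 1 else 0) + g a * (if b \<in> orb sm a then 1 else 0))"
    using assms(1) unfolding boundary_chain_def by blast
  have "(\<Sum>b\<in>D. c b) = (\<Sum>a\<in>Q1. f a + g a)" if D: "perfect_matching Q1 sp sm D" for D
  proof -
    have DQ: "D \<subseteq> Q1" and once: "\<And>a. a \<in> Q1 \<Longrightarrow> card (D \<inter> orb sp a) = 1 \<and> card (D \<inter> orb sm a) = 1"
      using D unfolding perfect_matching_def by auto
    have finD: "finite D" using DQ assms(2) finite_subset by blast
    have count: "(\<Sum>b\<in>D. if b \<in> F then 1 else 0) = int (card (D \<inter> F))" for F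
      using finD by (simp add: sum.If_cases Int_def)
    have "(\<Sum>b\<in>D. c b)
        = (\<Sum>b\<in>D. \<Sum>a\<in>Q1. f a * (if b \<in> orb sp a then 1 else 0) + g a * (if b \<in> orb sm a then 1 else 0))"
      using DQ fg by (intro sum.cong) auto
    also have "\<dots> = (\<Sum>a\<in>Q1. \<Sum>b\<in>D. f a * (if b \<in> orb sp a then 1 else 0) + g a * (if b \<in> orb sm a then 1 else 0))"
      by (rule sum.swap)
    also have "\<dots> = (\<Sum>a\<in>Q1. f a * int (card (D \<inter> orb sp a)) + g a * int (card (D \<inter> orb sm a)))"
      by (simp only: sum.distrib flip: sum_distrib_left count)
    also have "\<dots> = (\<Sum>a\<in>Q1. f a + g a)"
      using once by (intro sum.cong) auto
    finally show ?thesis .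
  qed
  then show thesis using that by blast
qed

lemma cycles_same_disp_matching_shift:
  assumes torus: "dimer_torus Q0 Q1 hQ tQ sp sm d"
    and "is_cycle Q1 hQ tQ p" "is_cycle Q1 hQ tQ q"
    and "sum_list (map d p) = sum_list (map d q)"
  obtains n where "\<And>D. perfect_matching Q1 sp sm D \<Longrightarrow>
      int (length (filter (\<lambda>a. a \<in> D) p)) = int (length (filter (\<lambda>a. a \<in> D) q)) + n"
proof -
  have fin: "finite Q1" using torus unfolding dimer_torus_def by blast
  define c where "c a = path_chain p a - path_chain q a" for a
  have "closed_chain Q0 Q1 hQ tQ c"
    unfolding c_def using assms(2,3) fin by (intro closed_chain_diff closed_chain_path_chain)
  moreover have "chain_disp Q1 d c = (0, 0)"
    unfolding c_def chain_disp_diff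
    using assms(2-4) fin by (simp add: chain_disp_path_chain is_cycle_subset zero_prod_def)
  ultimately have "boundary_chain Q1 sp sm c"
    using torus unfolding dimer_torus_def by blast
  then obtain n where n: "\<And>D. perfect_matching Q1 sp sm D \<Longrightarrow> (\<Sum>b\<in>D. c b) = n"
    using boundary_chain_sum_perfect_matching fin by blast
  have "int (length (filter (\<lambda>a. a \<in> D) p)) = int (length (filter (\<lambda>a. a \<in> D) q)) + n"
    if "perfect_matching Q1 sp sm D" for D
  proof -
    have "finite D" using that fin unfolding perfect_matching_def by (metis finite_subset)
    then show ?thesis
      using n[OF that] unfolding c_def by (simp add: sum_subtractf length_filter_mem_eq_sum_path_chain)
  qed
  then show thesis using that by blast
qed

lemma eq_sigma_pow_not_dvd_eq:
  assumes "eq_sigma_pow S m1 m2 n"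
    and "\<not> mono_dvd (sigma_mono S) m1" "\<not> mono_dvd (sigma_mono S) m2"
  shows "m1 = m2"
proof -
  obtain D1 D2 where "D1 \<in> S" "m1 D1 = 0" "D2 \<in> S" "m2 D2 = 0"
    using assms(2,3) unfolding mono_dvd_def sigma_mono_def by (auto split: if_splits)
  moreover have "\<And>D. D \<in> S \<Longrightarrow> int (m1 D) = int (m2 D) + n"
    using assms(1) unfolding eq_sigma_pow_def sigma_mono_def by simp
  ultimately have "n \<le> 0" "n \<ge> 0" by force+
  then have "n = 0" by simp
  with assms(1) show ?thesis unfolding eq_sigma_pow_def by (simp add: fun_eq_iff)
qed

theorem lemma4p18:
  fixes Q0 :: "'v set" and Q1 :: "'a set" and hQ tQ :: "'a \<Rightarrow> 'v"
    and sp sm :: "'a \<Rightarrow> 'a" and d :: "'a \<Rightarrow> int \<times> int"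
    and u :: "int \<times> int" and p q :: "'a list"
  defines "S \<equiv> {D. simple_matching Q0 Q1 hQ tQ sp sm D}"
  assumes "dimer_torus Q0 Q1 hQ tQ sp sm d"
    and "\<exists>D. perfect_matching Q1 sp sm D"
    and "u \<noteq> (0, 0)"
    and "in_C Q1 hQ tQ d u p" and "in_C Q1 hQ tQ d u q"
  shows "(\<exists>n::int. eq_sigma_pow S (tau_bar S p) (tau_bar S q) n) \<and>
         (\<not> mono_dvd (sigma_mono S) (tau_bar S p) \<and> \<not> mono_dvd (sigma_mono S) (tau_bar S q)
            \<longrightarrow> tau_bar S p = tau_bar S q)"
proof -
  obtain n where n: "\<And>D. perfect_matching Q1 sp sm D \<Longrightarrow>
      int (length (filter (\<lambda>a. a \<in> D) p)) = int (length (filter (\<lambda>a. a \<in> D) q)) + n"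
    using cycles_same_disp_matching_shift[OF assms(2)] assms(5,6) unfolding in_C_def by metis
  have "perfect_matching Q1 sp sm D" if "D \<in> S" for D
    using that unfolding S_def simple_matching_def by blast
  then have "int (tau_bar S p D) = int (tau_bar S q D) + n * int (sigma_mono S D)" for D
    using n by (cases "D \<in> S") (simp_all add: tau_bar_def sigma_mono_def)
  then have "eq_sigma_pow S (tau_bar S p) (tau_bar S q) n"
    unfolding eq_sigma_pow_def by blast
  then show ?thesis
    using eq_sigma_pow_not_dvd_eq by blast
qed

end
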